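(* Assume the Green's functions $G_P[2T]$, $G_N[T]$, $G_D[T]$ exist. Let $\sigma_1,\sigma_2\in L^1(I)$, let $u_N$ be the unique solution of $Lu=\sigma_1$ a.e. on $I$, $u\in X_{N,T}$, and $u_D$ the unique solution of $Lu=\sigma_2$ a.e. on $I$, $u\in X_{D,T}$. Then: 1. If $G_P[2T]\ge0$ on $J\times J$ and $|\sigma_2(t)|\le\sigma_1(t)$ for a.e. $t\in I$, then $|u_D(t)|\le u_N(t)$ for all $t\in I$. 2. If $G_P[2T]\le0$ on $J\times J$ and $0\le\sigma_2(t)\le\sigma_1(t)$ for a.e. $t\in I$, then $u_N(t)\le0$ and $u_N(t)\le u_D(t)$ for all $t\in I$. 3. If $G_P[2T]\le0$ on $J\times J$ and $\sigma_1(t)\le\sigma_2(t)\le0$ for a.e. $t\in I$, then $u_N(t)\ge0$ and $u_D(t)\le u_N(t)$ for all $t\in I$.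
   Context: Fix $n\ge 1$, $T>0$, $I=[0,T]$, $J=[0,2T]$. $W^{2n,1}(K)$: $u\in C^{2n-1}(K)$ with $u^{(2n-1)}$ absolutely continuous. Let $a_0,\dots,a_{2n-1}\in L^\alpha(I)$, $\alpha\ge1$, $Lu=u^{(2n)}+\sum_{k=0}^{2n-1}a_ku^{(k)}$ on $I$. $\widetilde L u=u^{(2n)}+\sum_{k=0}^{n-1}(\hat a_{2k+1}u^{(2k+1)}+\tilde a_{2k}u^{(2k)})$ on $J$, where $\tilde a_{2k}=a_{2k}$, $\hat a_{2k+1}=a_{2k+1}$ on $I$, and $\tilde a_{2k}(t)=a_{2k}(2T-t)$, $\hat a_{2k+1}(t)=-a_{2k+1}(2T-t)$ for $t\in(T,2T]$. An operator $M$ is nonresonant in $X$ if $Mu=0$ a.e., $u\in X$ forces $u\equiv0$; its Green's function $G$ then gives the unique solution $u(t)=\int G(t,s)\sigma(s)ds$ of $Mu=\sigma$, $u\in X$. $X_{N,T}=\{u\in W^{2n,1}(I): u^{(2k+1)}(0)=u^{(2k+1)}(T)=0,\ k=0,\dots,n-1\}$, $X_{D,T}=\{u\in W^{2n,1}(I): u^{(2k)}(0)=u^{(2k)}(T)=0,\ k=0,\dots,n-1\}$; $G_N[T]$, $G_D[T]$ are the Green's functions of $L$ on these spaces. $G_P[2T]$: Green's function of $\widetilde L$ on $\{u\in W^{2n,1}(J): u^{(k)}(0)=u^{(k)}(2T),\ k=0,\dots,2n-1\}$. *)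

theory Defs
  imports "HOL-Analysis.Analysis"
begin

definition abs_cont_on :: "real set \<Rightarrow> (real \<Rightarrow> real) \<Rightarrow> bool" where
  "abs_cont_on K f \<longleftrightarrow>
     (\<forall>\<epsilon>>0. \<exists>\<delta>>0. \<forall>(N::nat) (x::nat \<Rightarrow> real) (y::nat \<Rightarrow> real).
        (\<forall>i<N. x i \<in> K \<and> y i \<in> K \<and> x i \<le> y i) \<and>
        (\<forall>i<N. \<forall>j<N. i \<noteq> j \<longrightarrow> y i \<le> x j \<or> y j \<le> x i) \<and>
        (\<Sum>i<N. y i - x i) < \<delta>
        \<longrightarrow> (\<Sum>i<N. \<bar>f (y i) - f (x i)\<bar>) < \<epsilon>)"

text \<open>u belongs to W^{m,1}([0,b]) with derivative family D: D k is the k-th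
  derivative of u on [0,b] (one-sided at the endpoints) for k \<le> m-1,
  and D (m-1) is absolutely continuous.\<close>
definition W_derivs :: "nat \<Rightarrow> real \<Rightarrow> (real \<Rightarrow> real) \<Rightarrow> (nat \<Rightarrow> real \<Rightarrow> real) \<Rightarrow> bool" where
  "W_derivs m b u D \<longleftrightarrow>
     (\<forall>t\<in>{0..b}. D 0 t = u t) \<and>
     (\<forall>k<m - 1. \<forall>t\<in>{0..b}. (D k has_real_derivative D (Suc k) t) (at t within {0..b})) \<and>
     abs_cont_on {0..b} (D (m - 1))"

text \<open>u solves  u^{(m)} + sum_{k<m} c_k u^{(k)} = sigma  a.e. on [0,b],
  u in W^{m,1}([0,b]) and the boundary conditions BC (stated on the derivative family).
  u^{(m)}(t) is the derivative of u^{(m-1)} at t, which exists a.e.\<close>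
definition bvp_sol :: "nat \<Rightarrow> real \<Rightarrow> (nat \<Rightarrow> real \<Rightarrow> real) \<Rightarrow> ((nat \<Rightarrow> real \<Rightarrow> real) \<Rightarrow> bool)
    \<Rightarrow> (real \<Rightarrow> real) \<Rightarrow> (real \<Rightarrow> real) \<Rightarrow> bool" where
  "bvp_sol m b c BC u \<sigma> \<longleftrightarrow>
     (\<exists>D. W_derivs m b u D \<and> BC D \<and>
        (AE t in lebesgue_on {0..b}.
           \<exists>d. (D (m - 1) has_real_derivative d) (at t within {0..b}) \<and>
               d + (\<Sum>k<m. c k t * D k t) = \<sigma> t))"

definition nonresonant :: "nat \<Rightarrow> real \<Rightarrow> (nat \<Rightarrow> real \<Rightarrow> real) \<Rightarrow> ((nat \<Rightarrow> real \<Rightarrow> real) \<Rightarrow> bool) \<Rightarrow> bool" where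
  "nonresonant m b c BC \<longleftrightarrow>
     (\<forall>u. bvp_sol m b c BC u (\<lambda>_. 0) \<longrightarrow> (\<forall>t\<in>{0..b}. u t = 0))"

definition green_fun :: "nat \<Rightarrow> real \<Rightarrow> (nat \<Rightarrow> real \<Rightarrow> real) \<Rightarrow> ((nat \<Rightarrow> real \<Rightarrow> real) \<Rightarrow> bool)
    \<Rightarrow> (real \<Rightarrow> real \<Rightarrow> real) \<Rightarrow> bool" where
  "green_fun m b c BC G \<longleftrightarrow>
     nonresonant m b c BC \<and>
     (\<forall>\<sigma>. \<sigma> absolutely_integrable_on {0..b} \<longrightarrow>
        (\<forall>t\<in>{0..b}. (\<lambda>s. G t s * \<sigma> s) absolutely_integrable_on {0..b}) \<and>
        bvp_sol m b c BC (\<lambda>t. integral {0..b} (\<lambda>s. G t s * \<sigma> s)) \<sigma>)"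

text \<open>Boundary conditions (n = half the order).\<close>
definition BC_N :: "nat \<Rightarrow> real \<Rightarrow> (nat \<Rightarrow> real \<Rightarrow> real) \<Rightarrow> bool" where
  "BC_N n T D \<longleftrightarrow> (\<forall>k<n. D (2*k+1) 0 = 0 \<and> D (2*k+1) T = 0)"

definition BC_D :: "nat \<Rightarrow> real \<Rightarrow> (nat \<Rightarrow> real \<Rightarrow> real) \<Rightarrow> bool" where
  "BC_D n T D \<longleftrightarrow> (\<forall>k<n. D (2*k) 0 = 0 \<and> D (2*k) T = 0)"

definition BC_P :: "nat \<Rightarrow> real \<Rightarrow> (nat \<Rightarrow> real \<Rightarrow> real) \<Rightarrow> bool" where
  "BC_P m S D \<longleftrightarrow> (\<forall>k<m. D k 0 = D k S)"

definition ext_coeff :: "real \<Rightarrow> (nat \<Rightarrow> real \<Rightarrow> real) \<Rightarrow> nat \<Rightarrow> real \<Rightarrow> real" where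
  "ext_coeff T a k t =
     (if t \<le> T then a k t
      else if even k then a k (2*T - t) else - a k (2*T - t))"

end

theory Submission
  imports Defs
begin

text \<open>
  Extend \<open>\<sigma>\<^sub>1\<close> evenly and \<open>\<sigma>\<^sub>2\<close> oddly about \<open>T\<close> to \<open>[0, 2T]\<close>. The coefficients of
  \<open>L\<^sup>~\<close> are built so that \<open>t \<mapsto> \<plusminus>u(2T - t)\<close> solves the periodic problem whenever \<open>u\<close>
  does and the right-hand side has the matching parity; by nonresonance the periodic solutions
  \<open>\<integral> G\<^sub>P[2T](t, s) \<sigma>(s) ds\<close> inherit that parity. So the odd-order derivatives of the even
  solution and the even-order derivatives of the odd solution vanish at \<open>0\<close> and \<open>T\<close>: restricted
  to \<open>[0, T]\<close> they are \<open>u\<^sub>N\<close> and \<open>u\<^sub>D\<close>. Both are thus integrals against the same kernel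
  \<open>G\<^sub>P[2T]\<close>, and its sign together with the a.e. comparison of the extended right-hand sides
  gives the inequalities.
\<close>

definition nonoverlapping_intervals :: "real set \<Rightarrow> nat \<Rightarrow> (nat \<Rightarrow> real) \<Rightarrow> (nat \<Rightarrow> real) \<Rightarrow> bool" where
  "nonoverlapping_intervals K N x y \<longleftrightarrow>
     (\<forall>i<N. x i \<in> K \<and> y i \<in> K \<and> x i \<le> y i) \<and>
     (\<forall>i<N. \<forall>j<N. i \<noteq> j \<longrightarrow> y i \<le> x j \<or> y j \<le> x i)"

lemma abs_cont_on_iff:
  "abs_cont_on K f \<longleftrightarrow>
     (\<forall>\<epsilon>>0. \<exists>\<delta>>0. \<forall>N x y. nonoverlapping_intervals K N x y \<and> (\<Sum>i<N. y i - x i) < \<delta>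
        \<longrightarrow> (\<Sum>i<N. \<bar>f (y i) - f (x i)\<bar>) < \<epsilon>)"
  unfolding abs_cont_on_def nonoverlapping_intervals_def by simp

lemma nonoverlapping_intervals_mono:
  "nonoverlapping_intervals K' N x y \<Longrightarrow> K' \<subseteq> K \<Longrightarrow> nonoverlapping_intervals K N x y"
  unfolding nonoverlapping_intervals_def by blast

lemma nonoverlapping_intervals_reflect:
  "nonoverlapping_intervals {0..b} N x y \<Longrightarrow>
     nonoverlapping_intervals {0..b} N (\<lambda>i. b - y i) (\<lambda>i. b - x i)"
  unfolding nonoverlapping_intervals_def by (auto simp: disj_commute)

lemma abs_cont_on_subset: "abs_cont_on K f \<Longrightarrow> K' \<subseteq> K \<Longrightarrow> abs_cont_on K' f"
  unfolding abs_cont_on_iff by (metis nonoverlapping_intervals_mono)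

lemma abs_cont_on_diff:
  assumes f: "abs_cont_on K f" and g: "abs_cont_on K g"
  shows "abs_cont_on K (\<lambda>t. f t - g t)"
  unfolding abs_cont_on_iff
proof (intro allI impI)
  fix \<epsilon> :: real assume "\<epsilon> > 0"
  then have "\<epsilon>/2 > 0" by simp
  obtain \<delta>f where "\<delta>f > 0"
    and \<delta>f: "\<forall>N x y. nonoverlapping_intervals K N x y \<and> (\<Sum>i<N. y i - x i) < \<delta>f
        \<longrightarrow> (\<Sum>i<N. \<bar>f (y i) - f (x i)\<bar>) < \<epsilon>/2"
    using f[unfolded abs_cont_on_iff, rule_format, OF \<open>\<epsilon>/2 > 0\<close>] by (elim exE conjE)
  obtain \<delta>g where "\<delta>g > 0"
    and \<delta>g: "\<forall>N x y. nonoverlapping_intervals K N x y \<and> (\<Sum>i<N. y i - x i) < \<delta>g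
        \<longrightarrow> (\<Sum>i<N. \<bar>g (y i) - g (x i)\<bar>) < \<epsilon>/2"
    using g[unfolded abs_cont_on_iff, rule_format, OF \<open>\<epsilon>/2 > 0\<close>] by (elim exE conjE)
  show "\<exists>\<delta>>0. \<forall>N x y. nonoverlapping_intervals K N x y \<and> (\<Sum>i<N. y i - x i) < \<delta>
        \<longrightarrow> (\<Sum>i<N. \<bar>(f (y i) - g (y i)) - (f (x i) - g (x i))\<bar>) < \<epsilon>"
  proof (intro exI[of _ "min \<delta>f \<delta>g"] conjI allI impI)
    fix N x y assume xy: "nonoverlapping_intervals K N x y \<and> (\<Sum>i<N. y i - x i) < min \<delta>f \<delta>g"
    have "(\<Sum>i<N. \<bar>(f (y i) - g (y i)) - (f (x i) - g (x i))\<bar>)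
          \<le> (\<Sum>i<N. \<bar>f (y i) - f (x i)\<bar> + \<bar>g (y i) - g (x i)\<bar>)"
      by (rule sum_mono) linarith
    also have "\<dots> < \<epsilon>/2 + \<epsilon>/2"
      unfolding sum.distrib using \<delta>f \<delta>g xy by (intro add_strict_mono) auto
    finally show "(\<Sum>i<N. \<bar>(f (y i) - g (y i)) - (f (x i) - g (x i))\<bar>) < \<epsilon>" by simp
  qed (use \<open>\<delta>f > 0\<close> \<open>\<delta>g > 0\<close> in simp)
qed

lemma abs_cont_on_cmult:
  assumes f: "abs_cont_on K f"
  shows "abs_cont_on K (\<lambda>t. c * f t)"
  unfolding abs_cont_on_iff
proof (intro allI impI)
  fix \<epsilon> :: real assume "\<epsilon> > 0"
  then have "\<epsilon> / (\<bar>c\<bar> + 1) > 0" by simp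
  then obtain \<delta> where "\<delta> > 0"
    and \<delta>: "\<forall>N x y. nonoverlapping_intervals K N x y \<and> (\<Sum>i<N. y i - x i) < \<delta>
        \<longrightarrow> (\<Sum>i<N. \<bar>f (y i) - f (x i)\<bar>) < \<epsilon> / (\<bar>c\<bar> + 1)"
    using f[unfolded abs_cont_on_iff, rule_format, OF \<open>\<epsilon> / (\<bar>c\<bar> + 1) > 0\<close>] by (elim exE conjE)
  have "(\<Sum>i<N. \<bar>c * f (y i) - c * f (x i)\<bar>) < \<epsilon>"
    if "nonoverlapping_intervals K N x y" "(\<Sum>i<N. y i - x i) < \<delta>" for N x y
  proof -
    have "(\<Sum>i<N. \<bar>c * f (y i) - c * f (x i)\<bar>) = \<bar>c\<bar> * (\<Sum>i<N. \<bar>f (y i) - f (x i)\<bar>)"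
      by (simp add: sum_distrib_left abs_mult flip: right_diff_distrib)
    also have "\<dots> \<le> (\<bar>c\<bar> + 1) * (\<Sum>i<N. \<bar>f (y i) - f (x i)\<bar>)"
      by (intro mult_right_mono sum_nonneg) auto
    also have "\<dots> < (\<bar>c\<bar> + 1) * (\<epsilon> / (\<bar>c\<bar> + 1))"
      using \<delta> that by (intro mult_strict_left_mono) auto
    finally show ?thesis by simp
  qed
  then show "\<exists>\<delta>>0. \<forall>N x y. nonoverlapping_intervals K N x y \<and> (\<Sum>i<N. y i - x i) < \<delta>
        \<longrightarrow> (\<Sum>i<N. \<bar>c * f (y i) - c * f (x i)\<bar>) < \<epsilon>"
    using \<open>\<delta> > 0\<close> by blast
qed

lemma abs_cont_on_reflect:
  assumes f: "abs_cont_on {0..b} f"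
  shows "abs_cont_on {0..b} (\<lambda>t. f (b - t))"
  unfolding abs_cont_on_iff
proof (intro allI impI)
  fix \<epsilon> :: real assume "\<epsilon> > 0"
  then obtain \<delta> where "\<delta> > 0"
    and \<delta>: "\<forall>N x y. nonoverlapping_intervals {0..b} N x y \<and> (\<Sum>i<N. y i - x i) < \<delta>
        \<longrightarrow> (\<Sum>i<N. \<bar>f (y i) - f (x i)\<bar>) < \<epsilon>"
    using f[unfolded abs_cont_on_iff, rule_format, OF \<open>\<epsilon> > 0\<close>] by (elim exE conjE)
  have "(\<Sum>i<N. \<bar>f (b - y i) - f (b - x i)\<bar>) < \<epsilon>"
    if "nonoverlapping_intervals {0..b} N x y" "(\<Sum>i<N. y i - x i) < \<delta>" for N x y
    using \<delta>[rule_format, of N "\<lambda>i. b - y i" "\<lambda>i. b - x i"]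
      nonoverlapping_intervals_reflect[OF that(1)] that(2)
    by (simp add: abs_minus_commute)
  then show "\<exists>\<delta>>0. \<forall>N x y. nonoverlapping_intervals {0..b} N x y \<and> (\<Sum>i<N. y i - x i) < \<delta>
        \<longrightarrow> (\<Sum>i<N. \<bar>f (b - y i) - f (b - x i)\<bar>) < \<epsilon>"
    using \<open>\<delta> > 0\<close> by blast
qed

lemma AE_lebesgue_on_iff_negligible:
  fixes a b :: real
  shows "(AE t in lebesgue_on {a..b}. P t) \<longleftrightarrow> (\<exists>N. negligible N \<and> (\<forall>t\<in>{a..b} - N. P t))"
proof -
  have "(AE t in lebesgue_on {a..b}. P t) \<longleftrightarrow> (AE t in lebesgue. t \<in> {a..b} \<longrightarrow> P t)"
    by (simp add: AE_restrict_space_iff)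
  also have "\<dots> \<longleftrightarrow> (\<exists>N. negligible N \<and> {t. \<not> (t \<in> {a..b} \<longrightarrow> P t)} \<subseteq> N)"
    by (rule eventually_ae_filter_negligible)
  also have "\<dots> \<longleftrightarrow> (\<exists>N. negligible N \<and> (\<forall>t\<in>{a..b} - N. P t))"
    by blast
  finally show ?thesis .
qed

lemma negligible_reflection:
  fixes N :: "real set"
  assumes "negligible N"
  shows "negligible ((\<lambda>x. b - x) ` N)"
  by (rule negligible_differentiable_image_negligible) (use assms in \<open>auto intro!: derivative_intros\<close>)

lemma AE_lebesgue_on_fold:
  fixes T :: real
  assumes "AE t in lebesgue_on {0..T}. P t"
  shows "AE s in lebesgue_on {0..2*T}. P (if s \<le> T then s else 2*T - s)"
proof -
  obtain N where N: "negligible N" "\<forall>t\<in>{0..T} - N. P t"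
    using assms by (auto simp: AE_lebesgue_on_iff_negligible)
  have "P (if s \<le> T then s else 2*T - s)"
    if "s \<in> {0..2*T} - (N \<union> (\<lambda>x. 2*T - x) ` N)" for s
  proof (cases "s \<le> T")
    case False
    have "2*T - s \<notin> N"
    proof
      assume "2*T - s \<in> N"
      then have "s \<in> (\<lambda>x. 2*T - x) ` N" by (rule rev_image_eqI) simp
      with that show False by blast
    qed
    then show ?thesis using False that N(2) by auto
  qed (use that N(2) in auto)
  moreover have "negligible (N \<union> (\<lambda>x. 2*T - x) ` N)"
    using N(1) negligible_reflection[OF N(1)] by simp
  ultimately have "\<exists>N. negligible N \<and> (\<forall>s\<in>{0..2*T} - N. P (if s \<le> T then s else 2*T - s))"
    by blast
  then show ?thesis
    by (simp add: AE_lebesgue_on_iff_negligible)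
qed

lemma integral_mono_AE_lebesgue_on:
  fixes f g :: "real \<Rightarrow> real"
  assumes f: "f integrable_on {a..b}" and g: "g integrable_on {a..b}"
    and le: "AE x in lebesgue_on {a..b}. f x \<le> g x"
  shows "integral {a..b} f \<le> integral {a..b} g"
proof -
  obtain N where N: "negligible N" "\<forall>x\<in>{a..b} - N. f x \<le> g x"
    using le by (auto simp: AE_lebesgue_on_iff_negligible)
  have "((\<lambda>x. g x - f x) has_integral integral {a..b} (\<lambda>x. g x - f x)) {a..b}"
    using f g by (intro integrable_integral integrable_diff)
  then have "((\<lambda>x. if x \<in> N then 0 else g x - f x) has_integral integral {a..b} (\<lambda>x. g x - f x))
      {a..b}"
    by (rule has_integral_spike[OF N(1), rotated]) auto
  then have "0 \<le> integral {a..b} (\<lambda>x. g x - f x)"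
    by (rule has_integral_nonneg) (use N(2) in auto)
  then show ?thesis
    using integral_diff[OF g f] by simp
qed

definition reflect_ext :: "real \<Rightarrow> real \<Rightarrow> (real \<Rightarrow> real) \<Rightarrow> real \<Rightarrow> real" where
  "reflect_ext T sg f t = (if t \<le> T then f t else sg * f (2*T - t))"

lemma absolutely_integrable_reflect_ext:
  fixes f :: "real \<Rightarrow> real"
  assumes T: "T \<ge> 0" and f: "f absolutely_integrable_on {0..T}"
  shows "reflect_ext T sg f absolutely_integrable_on {0..2*T}"
proof -
  \<comment> \<open>\<open>x \<mapsto> 2T - x\<close> written as the inverse affinity that \<open>integrable_on_affinity\<close> produces\<close>
  have img: "(\<lambda>x. (1 / -1) *\<^sub>R x - ((1 / -1) *\<^sub>R (2*T))) ` cbox 0 T = {T..2*T}"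
    by (auto simp: image_iff intro!: bexI[of _ "2*T - x" for x])
  have reflected: "g integrable_on cbox 0 T \<Longrightarrow> (\<lambda>x. g (2*T - x)) integrable_on {T..2*T}"
    for g :: "real \<Rightarrow> real"
    using integrable_on_affinity[of "-1" g 0 T "2*T"] img by (simp add: algebra_simps)
  have "(\<lambda>x. f (2*T - x)) absolutely_integrable_on {T..2*T}"
    using f reflected[of f] reflected[of "\<lambda>x. \<bar>f x\<bar>"]
    unfolding absolutely_integrable_on_def by simp
  then have "(\<lambda>x. sg * f (2*T - x)) absolutely_integrable_on {T..2*T}"
    using absolutely_integrable_scaleR_left by force
  then have right: "reflect_ext T sg f absolutely_integrable_on {T..2*T}"
    by (rule absolutely_integrable_spike[of _ _ "{T}"]) (auto simp: reflect_ext_def)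
  have left: "reflect_ext T sg f absolutely_integrable_on {0..T}"
    by (rule absolutely_integrable_spike[OF f, of "{}"]) (auto simp: reflect_ext_def)
  show ?thesis
    by (rule absolutely_integrable_on_combine[OF left right]) (use T in auto)
qed

lemma reflect_ext_symmetric:
  "sg \<in> {-1, 1} \<Longrightarrow> t \<noteq> T \<Longrightarrow> reflect_ext T sg f t = sg * reflect_ext T sg f (2*T - t)"
  by (auto simp: reflect_ext_def)

definition lin_ode_ae :: "nat \<Rightarrow> real \<Rightarrow> (nat \<Rightarrow> real \<Rightarrow> real) \<Rightarrow> (nat \<Rightarrow> real \<Rightarrow> real)
    \<Rightarrow> (real \<Rightarrow> real) \<Rightarrow> bool" where
  "lin_ode_ae m b c D \<sigma> \<longleftrightarrow>
     (AE t in lebesgue_on {0..b}.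
        \<exists>d. (D (m - 1) has_real_derivative d) (at t within {0..b}) \<and>
            d + (\<Sum>k<m. c k t * D k t) = \<sigma> t)"

lemma bvp_sol_iff:
  "bvp_sol m b c BC u \<sigma> \<longleftrightarrow> (\<exists>D. W_derivs m b u D \<and> BC D \<and> lin_ode_ae m b c D \<sigma>)"
  by (simp add: bvp_sol_def lin_ode_ae_def)

lemma W_derivs_unique:
  assumes b: "0 < b" and D: "W_derivs m b u D" and E: "W_derivs m b u E"
  shows "k < m \<Longrightarrow> t \<in> {0..b} \<Longrightarrow> D k t = E k t"
proof (induction k arbitrary: t)
  case 0
  then show ?case using D E unfolding W_derivs_def by auto
next
  case (Suc k)
  then have k: "k < m - 1" by simp
  have dD: "(D k has_real_derivative D (Suc k) t) (at t within {0..b})"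
    using D k Suc.prems unfolding W_derivs_def by blast
  have dE: "(E k has_real_derivative E (Suc k) t) (at t within {0..b})"
    using E k Suc.prems unfolding W_derivs_def by blast
  have dE': "(E k has_real_derivative D (Suc k) t) (at t within {0..b})"
    by (rule has_field_derivative_transform_within[OF dD, of 1]) (use Suc in auto)
  show ?case
    using vector_derivative_unique_within_closed_interval[of 0 b t "E k" "D (Suc k) t" "E (Suc k) t"]
      dE dE' b Suc.prems by (simp add: has_real_derivative_iff_has_vector_derivative)
qed

lemma W_derivs_diff:
  "W_derivs m b u D \<Longrightarrow> W_derivs m b v E \<Longrightarrow>
     W_derivs m b (\<lambda>t. u t - v t) (\<lambda>k t. D k t - E k t)"
  unfolding W_derivs_def by (auto intro!: DERIV_diff abs_cont_on_diff)

lemma W_derivs_cong: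
  "W_derivs m b u D \<Longrightarrow> (\<And>t. t \<in> {0..b} \<Longrightarrow> u t = v t) \<Longrightarrow> W_derivs m b v D"
  unfolding W_derivs_def by simp

lemma lin_ode_ae_diff:
  assumes "lin_ode_ae m b c D \<sigma>" and "lin_ode_ae m b c E \<tau>"
  shows "lin_ode_ae m b c (\<lambda>k t. D k t - E k t) (\<lambda>t. \<sigma> t - \<tau> t)"
  using assms unfolding lin_ode_ae_def
proof (elim AE_mp, intro AE_I2 impI)
  fix t
  assume "\<exists>d. (E (m - 1) has_real_derivative d) (at t within {0..b}) \<and>
              d + (\<Sum>k<m. c k t * E k t) = \<tau> t"
    and "\<exists>d. (D (m - 1) has_real_derivative d) (at t within {0..b}) \<and>
              d + (\<Sum>k<m. c k t * D k t) = \<sigma> t"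
  then obtain d e where
    "(D (m - 1) has_real_derivative d) (at t within {0..b})" "d + (\<Sum>k<m. c k t * D k t) = \<sigma> t"
    "(E (m - 1) has_real_derivative e) (at t within {0..b})" "e + (\<Sum>k<m. c k t * E k t) = \<tau> t"
    by blast
  then show "\<exists>d. ((\<lambda>t. D (m - 1) t - E (m - 1) t) has_real_derivative d) (at t within {0..b}) \<and>
              d + (\<Sum>k<m. c k t * (D k t - E k t)) = \<sigma> t - \<tau> t"
    by (intro exI[of _ "d - e"])
      (auto intro!: DERIV_diff simp: right_diff_distrib sum_subtractf algebra_simps)
qed

lemma bvp_sol_unique:
  assumes nr: "nonresonant m b c BC"
    and BC_diff: "\<And>D E. BC D \<Longrightarrow> BC E \<Longrightarrow> BC (\<lambda>k t. D k t - E k t)"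
    and u: "bvp_sol m b c BC u \<sigma>" and v: "bvp_sol m b c BC v \<sigma>"
  shows "\<forall>t\<in>{0..b}. u t = v t"
proof -
  obtain D E where D: "W_derivs m b u D" "BC D" "lin_ode_ae m b c D \<sigma>"
    and E: "W_derivs m b v E" "BC E" "lin_ode_ae m b c E \<sigma>"
    using u v unfolding bvp_sol_iff by blast
  have "bvp_sol m b c BC (\<lambda>t. u t - v t) (\<lambda>t. \<sigma> t - \<sigma> t)"
    unfolding bvp_sol_iff
    using W_derivs_diff[OF D(1) E(1)] BC_diff[OF D(2) E(2)] lin_ode_ae_diff[OF D(3) E(3)]
    by (intro exI conjI)
  then have "bvp_sol m b c BC (\<lambda>t. u t - v t) (\<lambda>_. 0)"
    by simp
  with nr have "\<forall>t\<in>{0..b}. u t - v t = 0"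
    unfolding nonresonant_def by blast
  then show ?thesis by simp
qed

lemma has_real_derivative_reflect:
  assumes "(f has_real_derivative d) (at (b - t) within {0..b})" and "t \<in> {0..b}"
  shows "((\<lambda>t. f (b - t)) has_real_derivative - d) (at t within {0..b})"
proof -
  have img: "(\<lambda>t. b - t) ` {0..b} = {0..b}"
    by (auto simp: image_iff intro!: bexI[of _ "b - x" for x])
  have "((\<lambda>t. b - t) has_vector_derivative -1) (at t within {0..b})"
    by (auto intro!: derivative_eq_intros simp flip: has_real_derivative_iff_has_vector_derivative)
  then have "((f \<circ> (\<lambda>t. b - t)) has_vector_derivative (-1 * d)) (at t within {0..b})"
    by (rule field_vector_diff_chain_within) (use assms img in simp)
  then show ?thesis
    by (simp add: has_real_derivative_iff_has_vector_derivative o_def)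
qed

lemma W_derivs_reflect:
  assumes "W_derivs m b u D"
  shows "W_derivs m b (\<lambda>t. sg * u (b - t)) (\<lambda>k t. sg * (-1)^k * D k (b - t))"
  unfolding W_derivs_def
proof (intro conjI ballI allI impI)
  fix k t assume "k < m - 1" and t: "t \<in> {0..b}"
  then have "(D k has_real_derivative D (Suc k) (b - t)) (at (b - t) within {0..b})"
    using assms unfolding W_derivs_def by auto
  from DERIV_cmult[OF has_real_derivative_reflect[OF this t], of "sg * (-1)^k"]
  show "((\<lambda>t. sg * (-1)^k * D k (b - t)) has_real_derivative sg * (-1)^Suc k * D (Suc k) (b - t))
      (at t within {0..b})"
    by simp
next
  show "abs_cont_on {0..b} (\<lambda>t. sg * (-1)^(m - 1) * D (m - 1) (b - t))"
    using assms unfolding W_derivs_def by (intro abs_cont_on_cmult abs_cont_on_reflect) simp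
qed (use assms in \<open>simp add: W_derivs_def\<close>)

text \<open>The symmetry hypotheses may fail at the midpoint \<open>b/2\<close>, where \<open>ext_coeff\<close> and
  \<open>reflect_ext\<close> switch branches.\<close>

lemma lin_ode_ae_reflect:
  assumes m: "even m" "0 < m"
    and c: "\<And>k t. t \<in> {0..b} \<Longrightarrow> 2*t \<noteq> b \<Longrightarrow> c k t * (-1)^k = c k (b - t)"
    and \<sigma>: "\<And>t. t \<in> {0..b} \<Longrightarrow> 2*t \<noteq> b \<Longrightarrow> \<sigma> t = sg * \<sigma> (b - t)"
    and D: "lin_ode_ae m b c D \<sigma>"
  shows "lin_ode_ae m b c (\<lambda>k t. sg * (-1)^k * D k (b - t)) \<sigma>"
proof -
  obtain N where N: "negligible N" and ode: "\<And>t. t \<in> {0..b} - N \<Longrightarrow>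
      \<exists>d. (D (m - 1) has_real_derivative d) (at t within {0..b}) \<and>
          d + (\<Sum>k<m. c k t * D k t) = \<sigma> t"
    using D unfolding lin_ode_ae_def AE_lebesgue_on_iff_negligible by blast
  have "\<exists>d. ((\<lambda>t. sg * (-1)^(m - 1) * D (m - 1) (b - t)) has_real_derivative d) (at t within {0..b}) \<and>
      d + (\<Sum>k<m. c k t * (sg * (-1)^k * D k (b - t))) = \<sigma> t"
    if t: "t \<in> {0..b} - ((\<lambda>x. b - x) ` N \<union> {b/2})" for t
  proof -
    have tb: "t \<in> {0..b}" "2*t \<noteq> b"
      using t by auto
    have "b - t \<in> {0..b} - N"
      using t by (auto simp: image_iff)
    then obtain d where d: "(D (m - 1) has_real_derivative d) (at (b - t) within {0..b})"
      and eq: "d + (\<Sum>k<m. c k (b - t) * D k (b - t)) = \<sigma> (b - t)"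
      using ode by blast
    have odd: "(-1::real)^(m - 1) = -1"
      using m by (simp add: neg_one_odd_power)
    have deriv: "((\<lambda>t. sg * (-1)^(m - 1) * D (m - 1) (b - t)) has_real_derivative sg * d)
        (at t within {0..b})"
      using DERIV_cmult[OF has_real_derivative_reflect[OF d tb(1)], of "sg * (-1)^(m - 1)"] odd
      by simp
    have "(\<Sum>k<m. c k t * (sg * (-1)^k * D k (b - t))) = sg * (\<Sum>k<m. c k (b - t) * D k (b - t))"
      unfolding sum_distrib_left
      by (rule sum.cong[OF refl]) (simp add: c[OF tb, symmetric] algebra_simps)
    then have "sg * d + (\<Sum>k<m. c k t * (sg * (-1)^k * D k (b - t))) = sg * \<sigma> (b - t)"
      by (simp flip: eq add: distrib_left)
    also have "\<dots> = \<sigma> t"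
      using \<sigma>[OF tb] by simp
    finally show ?thesis
      using deriv by blast
  qed
  moreover have "negligible ((\<lambda>x. b - x) ` N \<union> {b/2})"
    using negligible_reflection[OF N] by simp
  ultimately show ?thesis
    unfolding lin_ode_ae_def AE_lebesgue_on_iff_negligible
    by (intro exI[of _ "(\<lambda>x. b - x) ` N \<union> {b/2}"] conjI ballI)
qed

lemma BC_P_reflect:
  "BC_P m b D \<Longrightarrow> BC_P m b (\<lambda>k t. sg * (-1)^k * D k (b - t))"
  unfolding BC_P_def by simp

lemma BC_P_diff:
  "BC_P m b D \<Longrightarrow> BC_P m b E \<Longrightarrow> BC_P m b (\<lambda>k t. D k t - E k t)"
  unfolding BC_P_def by simp

lemma BC_N_diff:
  "BC_N n T D \<Longrightarrow> BC_N n T E \<Longrightarrow> BC_N n T (\<lambda>k t. D k t - E k t)"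
  unfolding BC_N_def by simp

lemma BC_D_diff:
  "BC_D n T D \<Longrightarrow> BC_D n T E \<Longrightarrow> BC_D n T (\<lambda>k t. D k t - E k t)"
  unfolding BC_D_def by simp

lemma periodic_sol_symmetric:
  assumes b: "0 < b" and m: "even m" "0 < m"
    and c: "\<And>k t. t \<in> {0..b} \<Longrightarrow> 2*t \<noteq> b \<Longrightarrow> c k t * (-1)^k = c k (b - t)"
    and \<sigma>: "\<And>t. t \<in> {0..b} \<Longrightarrow> 2*t \<noteq> b \<Longrightarrow> \<sigma> t = sg * \<sigma> (b - t)"
    and nr: "nonresonant m b c (BC_P m b)"
    and D: "W_derivs m b u D" "BC_P m b D" "lin_ode_ae m b c D \<sigma>"
    and k: "k < m" and t: "t \<in> {0..b}"
  shows "D k t = sg * (-1)^k * D k (b - t)"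
proof -
  let ?E = "\<lambda>k t. sg * (-1)^k * D k (b - t)"
  have v: "bvp_sol m b c (BC_P m b) (\<lambda>t. sg * u (b - t)) \<sigma>"
    unfolding bvp_sol_iff
    using W_derivs_reflect[OF D(1)] BC_P_reflect[OF D(2)] lin_ode_ae_reflect[OF m c \<sigma> D(3)]
    by (intro exI conjI)
  have u: "bvp_sol m b c (BC_P m b) u \<sigma>"
    unfolding bvp_sol_iff using D by (intro exI conjI)
  have "\<forall>t\<in>{0..b}. sg * u (b - t) = u t"
    by (rule bvp_sol_unique[OF nr BC_P_diff v u])
  then have "W_derivs m b u ?E"
    using W_derivs_cong[OF W_derivs_reflect[OF D(1)]] by simp
  from W_derivs_unique[OF b D(1) this k t] show ?thesis .
qed

lemma bvp_sol_restrict: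
  assumes T: "0 \<le> T" "T \<le> b"
    and D: "W_derivs m b u D" "BC D" "lin_ode_ae m b c D \<sigma>'"
    and c: "\<And>k t. t \<in> {0..T} \<Longrightarrow> c k t = a k t"
    and \<sigma>: "\<And>t. t \<in> {0..T} \<Longrightarrow> \<sigma>' t = \<sigma> t"
  shows "bvp_sol m T a BC u \<sigma>"
proof -
  have sub: "{0..T} \<subseteq> {0..b}"
    using T by auto
  have "W_derivs m T u D"
    using D(1) sub unfolding W_derivs_def
    by (auto intro!: DERIV_subset[OF _ sub] abs_cont_on_subset[OF _ sub])
  moreover have "lin_ode_ae m T a D \<sigma>"
  proof -
    obtain N where N: "negligible N" and ode: "\<And>t. t \<in> {0..b} - N \<Longrightarrow>
        \<exists>d. (D (m - 1) has_real_derivative d) (at t within {0..b}) \<and>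
            d + (\<Sum>k<m. c k t * D k t) = \<sigma>' t"
      using D(3) unfolding lin_ode_ae_def AE_lebesgue_on_iff_negligible by blast
    have "\<exists>d. (D (m - 1) has_real_derivative d) (at t within {0..T}) \<and>
            d + (\<Sum>k<m. a k t * D k t) = \<sigma> t" if t: "t \<in> {0..T} - N" for t
      using ode[of t] t sub c \<sigma> by (auto intro: DERIV_subset[OF _ sub])
    with N show ?thesis
      unfolding lin_ode_ae_def AE_lebesgue_on_iff_negligible by (intro exI[of _ N] conjI ballI)
  qed
  ultimately show ?thesis
    unfolding bvp_sol_iff using D(2) by (intro exI conjI)
qed

lemma BC_P_odd_component_vanishes:
  fixes T :: real
  assumes "BC_P m (2*T) D" "j < m" "0 \<le> T"
    and odd: "\<And>t. t \<in> {0..2*T} \<Longrightarrow> D j t = - D j (2*T - t)"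
  shows "D j 0 = 0 \<and> D j T = 0"
proof -
  have "D j 0 = D j (2*T)"
    using assms(1,2) by (simp add: BC_P_def)
  moreover have "D j 0 = - D j (2*T)" "D j T = - D j T"
    using odd[of 0] odd[of T] assms(3) by simp_all
  ultimately show ?thesis
    by simp
qed

lemma ext_coeff_symmetric:
  "t \<noteq> T \<Longrightarrow> ext_coeff T a k t * (-1)^k = ext_coeff T a k (2*T - t)"
  by (cases "even k") (auto simp: ext_coeff_def)

lemma green_fun_nonresonant: "green_fun m b c BC G \<Longrightarrow> nonresonant m b c BC"
  by (simp add: green_fun_def)

lemma green_fun_integrable:
  assumes "green_fun m b c BC G" "\<sigma> absolutely_integrable_on {0..b}" "t \<in> {0..b}"
  shows "(\<lambda>s. G t s * \<sigma> s) integrable_on {0..b}"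
  using assms unfolding green_fun_def absolutely_integrable_on_def by blast

lemma green_fun_sol:
  "green_fun m b c BC G \<Longrightarrow> \<sigma> absolutely_integrable_on {0..b} \<Longrightarrow>
     bvp_sol m b c BC (\<lambda>t. integral {0..b} (\<lambda>s. G t s * \<sigma> s)) \<sigma>"
  by (simp add: green_fun_def)

lemma periodic_green_reflect_ext_sol:
  fixes T :: real
  assumes n: "1 \<le> n" and T: "0 < T"
    and GP: "green_fun (2*n) (2*T) (ext_coeff T a) (BC_P (2*n) (2*T)) GP"
    and \<sigma>: "\<sigma> absolutely_integrable_on {0..T}" and sg: "sg \<in> {-1, 1}"
  obtains D
  where "W_derivs (2*n) (2*T) (\<lambda>t. integral {0..2*T} (\<lambda>s. GP t s * reflect_ext T sg \<sigma> s)) D"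
    and "BC_P (2*n) (2*T) D"
    and "lin_ode_ae (2*n) (2*T) (ext_coeff T a) D (reflect_ext T sg \<sigma>)"
    and "\<And>k t. k < 2*n \<Longrightarrow> t \<in> {0..2*T} \<Longrightarrow> D k t = sg * (-1)^k * D k (2*T - t)"
proof -
  have "reflect_ext T sg \<sigma> absolutely_integrable_on {0..2*T}"
    using absolutely_integrable_reflect_ext T \<sigma> by simp
  then obtain D
    where D: "W_derivs (2*n) (2*T) (\<lambda>t. integral {0..2*T} (\<lambda>s. GP t s * reflect_ext T sg \<sigma> s)) D"
      "BC_P (2*n) (2*T) D" "lin_ode_ae (2*n) (2*T) (ext_coeff T a) D (reflect_ext T sg \<sigma>)"
    using green_fun_sol[OF GP] unfolding bvp_sol_iff by blast
  have c: "ext_coeff T a k t * (-1)^k = ext_coeff T a k (2*T - t)" if "2*t \<noteq> 2*T" for k t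
    by (rule ext_coeff_symmetric) (use that in simp)
  have \<sigma>_sym: "reflect_ext T sg \<sigma> t = sg * reflect_ext T sg \<sigma> (2*T - t)" if "2*t \<noteq> 2*T" for t
    by (rule reflect_ext_symmetric[OF sg]) (use that in simp)
  have "D k t = sg * (-1)^k * D k (2*T - t)" if "k < 2*n" "t \<in> {0..2*T}" for k t
    using periodic_sol_symmetric[OF _ _ _ c \<sigma>_sym green_fun_nonresonant[OF GP] D that] T n
    by simp
  with D that show thesis
    by blast
qed

lemma periodic_green_neumann_sol:
  fixes T :: real
  assumes n: "1 \<le> n" and T: "0 < T"
    and GP: "green_fun (2*n) (2*T) (ext_coeff T a) (BC_P (2*n) (2*T)) GP"
    and \<sigma>: "\<sigma> absolutely_integrable_on {0..T}"
  shows "bvp_sol (2*n) T a (BC_N n T) (\<lambda>t. integral {0..2*T} (\<lambda>s. GP t s * reflect_ext T 1 \<sigma> s)) \<sigma>"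
proof -
  obtain D
  where D: "W_derivs (2*n) (2*T) (\<lambda>t. integral {0..2*T} (\<lambda>s. GP t s * reflect_ext T 1 \<sigma> s)) D"
      "BC_P (2*n) (2*T) D" "lin_ode_ae (2*n) (2*T) (ext_coeff T a) D (reflect_ext T 1 \<sigma>)"
    and sym: "\<And>k t. k < 2*n \<Longrightarrow> t \<in> {0..2*T} \<Longrightarrow> D k t = (-1)^k * D k (2*T - t)"
    using periodic_green_reflect_ext_sol[OF n T GP \<sigma>, of 1] by auto
  have "D (2*k+1) 0 = 0 \<and> D (2*k+1) T = 0" if "k < n" for k
  proof (rule BC_P_odd_component_vanishes[OF D(2)])
    show "D (2*k+1) t = - D (2*k+1) (2*T - t)" if "t \<in> {0..2*T}" for t
      using sym[of "2*k+1" t] \<open>k < n\<close> that by simp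
  qed (use that T in auto)
  then have BC: "BC_N n T D"
    by (simp add: BC_N_def)
  show ?thesis
    by (rule bvp_sol_restrict[where BC = "BC_N n T", OF _ _ D(1) BC D(3)])
      (use T in \<open>auto simp: ext_coeff_def reflect_ext_def\<close>)
qed

lemma periodic_green_dirichlet_sol:
  fixes T :: real
  assumes n: "1 \<le> n" and T: "0 < T"
    and GP: "green_fun (2*n) (2*T) (ext_coeff T a) (BC_P (2*n) (2*T)) GP"
    and \<sigma>: "\<sigma> absolutely_integrable_on {0..T}"
  shows "bvp_sol (2*n) T a (BC_D n T) (\<lambda>t. integral {0..2*T} (\<lambda>s. GP t s * reflect_ext T (-1) \<sigma> s)) \<sigma>"
proof -
  obtain D
  where D: "W_derivs (2*n) (2*T) (\<lambda>t. integral {0..2*T} (\<lambda>s. GP t s * reflect_ext T (-1) \<sigma> s)) D"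
      "BC_P (2*n) (2*T) D" "lin_ode_ae (2*n) (2*T) (ext_coeff T a) D (reflect_ext T (-1) \<sigma>)"
    and sym: "\<And>k t. k < 2*n \<Longrightarrow> t \<in> {0..2*T} \<Longrightarrow> D k t = - ((-1)^k * D k (2*T - t))"
    using periodic_green_reflect_ext_sol[OF n T GP \<sigma>, of "-1"] by auto
  have "D (2*k) 0 = 0 \<and> D (2*k) T = 0" if "k < n" for k
  proof (rule BC_P_odd_component_vanishes[OF D(2)])
    show "D (2*k) t = - D (2*k) (2*T - t)" if "t \<in> {0..2*T}" for t
      using sym[of "2*k" t] \<open>k < n\<close> that by simp
  qed (use that T in auto)
  then have BC: "BC_D n T D"
    by (simp add: BC_D_def)
  show ?thesis
    by (rule bvp_sol_restrict[where BC = "BC_D n T", OF _ _ D(1) BC D(3)])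
      (use T in \<open>auto simp: ext_coeff_def reflect_ext_def\<close>)
qed

lemma integral_mult_mono_nonneg:
  fixes G f g :: "real \<Rightarrow> real"
  assumes G: "\<And>s. s \<in> {a..b} \<Longrightarrow> 0 \<le> G s"
    and f: "(\<lambda>s. G s * f s) integrable_on {a..b}" and g: "(\<lambda>s. G s * g s) integrable_on {a..b}"
    and le: "AE s in lebesgue_on {a..b}. f s \<le> g s"
  shows "integral {a..b} (\<lambda>s. G s * f s) \<le> integral {a..b} (\<lambda>s. G s * g s)"
  using f g
proof (rule integral_mono_AE_lebesgue_on)
  show "AE s in lebesgue_on {a..b}. G s * f s \<le> G s * g s"
    using AE_space le by eventually_elim (simp add: G mult_left_mono)
qed

lemma integral_mult_mono_nonpos:
  fixes G f g :: "real \<Rightarrow> real"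
  assumes G: "\<And>s. s \<in> {a..b} \<Longrightarrow> G s \<le> 0"
    and f: "(\<lambda>s. G s * f s) integrable_on {a..b}" and g: "(\<lambda>s. G s * g s) integrable_on {a..b}"
    and le: "AE s in lebesgue_on {a..b}. f s \<le> g s"
  shows "integral {a..b} (\<lambda>s. G s * g s) \<le> integral {a..b} (\<lambda>s. G s * f s)"
  using g f
proof (rule integral_mono_AE_lebesgue_on)
  show "AE s in lebesgue_on {a..b}. G s * g s \<le> G s * f s"
    using AE_space le by eventually_elim (simp add: G mult_left_mono_neg)
qed

lemma integral_reflect_ext_abs_le:
  fixes K \<sigma>1 \<sigma>2 :: "real \<Rightarrow> real"
  assumes K: "\<And>s. s \<in> {0..2*T} \<Longrightarrow> 0 \<le> K s"
    and int1: "(\<lambda>s. K s * reflect_ext T 1 \<sigma>1 s) integrable_on {0..2*T}"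
    and int2: "(\<lambda>s. K s * reflect_ext T (-1) \<sigma>2 s) integrable_on {0..2*T}"
    and \<sigma>: "AE t in lebesgue_on {0..T}. \<bar>\<sigma>2 t\<bar> \<le> \<sigma>1 t"
  shows "\<bar>integral {0..2*T} (\<lambda>s. K s * reflect_ext T (-1) \<sigma>2 s)\<bar>
    \<le> integral {0..2*T} (\<lambda>s. K s * reflect_ext T 1 \<sigma>1 s)"
proof -
  have "AE s in lebesgue_on {0..2*T}. reflect_ext T (-1) \<sigma>2 s \<le> reflect_ext T 1 \<sigma>1 s
      \<and> - reflect_ext T (-1) \<sigma>2 s \<le> reflect_ext T 1 \<sigma>1 s"
    using AE_lebesgue_on_fold[OF \<sigma>] by eventually_elim (auto simp: reflect_ext_def)
  then have ae1: "AE s in lebesgue_on {0..2*T}. reflect_ext T (-1) \<sigma>2 s \<le> reflect_ext T 1 \<sigma>1 s"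
    and ae2: "AE s in lebesgue_on {0..2*T}. - reflect_ext T (-1) \<sigma>2 s \<le> reflect_ext T 1 \<sigma>1 s"
    by (auto elim: AE_mp)
  have "(\<lambda>s. K s * - reflect_ext T (-1) \<sigma>2 s) integrable_on {0..2*T}"
    using integrable_neg[OF int2] by simp
  from integral_mult_mono_nonneg[OF K int2 int1 ae1] integral_mult_mono_nonneg[OF K this int1 ae2]
  show ?thesis
    by (simp add: integral_neg)
qed

lemma integral_reflect_ext_nonpos:
  fixes K \<sigma>1 \<sigma>2 :: "real \<Rightarrow> real"
  assumes K: "\<And>s. s \<in> {0..2*T} \<Longrightarrow> K s \<le> 0"
    and int1: "(\<lambda>s. K s * reflect_ext T 1 \<sigma>1 s) integrable_on {0..2*T}"
    and int2: "(\<lambda>s. K s * reflect_ext T (-1) \<sigma>2 s) integrable_on {0..2*T}"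
    and \<sigma>: "AE t in lebesgue_on {0..T}. 0 \<le> \<sigma>2 t \<and> \<sigma>2 t \<le> \<sigma>1 t"
  shows "integral {0..2*T} (\<lambda>s. K s * reflect_ext T 1 \<sigma>1 s) \<le> 0"
    and "integral {0..2*T} (\<lambda>s. K s * reflect_ext T 1 \<sigma>1 s)
      \<le> integral {0..2*T} (\<lambda>s. K s * reflect_ext T (-1) \<sigma>2 s)"
proof -
  have "AE s in lebesgue_on {0..2*T}. 0 \<le> reflect_ext T 1 \<sigma>1 s
      \<and> reflect_ext T (-1) \<sigma>2 s \<le> reflect_ext T 1 \<sigma>1 s"
    using AE_lebesgue_on_fold[OF \<sigma>] by eventually_elim (auto simp: reflect_ext_def)
  then have "AE s in lebesgue_on {0..2*T}. 0 \<le> reflect_ext T 1 \<sigma>1 s"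
    and "AE s in lebesgue_on {0..2*T}. reflect_ext T (-1) \<sigma>2 s \<le> reflect_ext T 1 \<sigma>1 s"
    by (auto elim: AE_mp)
  from integral_mult_mono_nonpos[OF K _ int1 this(1)]
    integral_mult_mono_nonpos[OF K int2 int1 this(2)]
  show "integral {0..2*T} (\<lambda>s. K s * reflect_ext T 1 \<sigma>1 s) \<le> 0"
    and "integral {0..2*T} (\<lambda>s. K s * reflect_ext T 1 \<sigma>1 s)
      \<le> integral {0..2*T} (\<lambda>s. K s * reflect_ext T (-1) \<sigma>2 s)"
    by (simp_all add: integrable_0)
qed

lemma integral_reflect_ext_nonneg:
  fixes K \<sigma>1 \<sigma>2 :: "real \<Rightarrow> real"
  assumes K: "\<And>s. s \<in> {0..2*T} \<Longrightarrow> K s \<le> 0"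
    and int1: "(\<lambda>s. K s * reflect_ext T 1 \<sigma>1 s) integrable_on {0..2*T}"
    and int2: "(\<lambda>s. K s * reflect_ext T (-1) \<sigma>2 s) integrable_on {0..2*T}"
    and \<sigma>: "AE t in lebesgue_on {0..T}. \<sigma>1 t \<le> \<sigma>2 t \<and> \<sigma>2 t \<le> 0"
  shows "0 \<le> integral {0..2*T} (\<lambda>s. K s * reflect_ext T 1 \<sigma>1 s)"
    and "integral {0..2*T} (\<lambda>s. K s * reflect_ext T (-1) \<sigma>2 s)
      \<le> integral {0..2*T} (\<lambda>s. K s * reflect_ext T 1 \<sigma>1 s)"
proof -
  have "AE s in lebesgue_on {0..2*T}. reflect_ext T 1 \<sigma>1 s \<le> 0
      \<and> reflect_ext T 1 \<sigma>1 s \<le> reflect_ext T (-1) \<sigma>2 s"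
    using AE_lebesgue_on_fold[OF \<sigma>] by eventually_elim (auto simp: reflect_ext_def)
  then have "AE s in lebesgue_on {0..2*T}. reflect_ext T 1 \<sigma>1 s \<le> 0"
    and "AE s in lebesgue_on {0..2*T}. reflect_ext T 1 \<sigma>1 s \<le> reflect_ext T (-1) \<sigma>2 s"
    by (auto elim: AE_mp)
  from integral_mult_mono_nonpos[OF K int1 _ this(1)]
    integral_mult_mono_nonpos[OF K int1 int2 this(2)]
  show "0 \<le> integral {0..2*T} (\<lambda>s. K s * reflect_ext T 1 \<sigma>1 s)"
    and "integral {0..2*T} (\<lambda>s. K s * reflect_ext T (-1) \<sigma>2 s)
      \<le> integral {0..2*T} (\<lambda>s. K s * reflect_ext T 1 \<sigma>1 s)"
    by (simp_all add: integrable_0)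
qed

theorem theorem6p2:
  fixes n :: nat and T \<alpha> :: real and a :: "nat \<Rightarrow> real \<Rightarrow> real"
    and GP :: "real \<Rightarrow> real \<Rightarrow> real"
    and \<sigma>1 \<sigma>2 uN uD :: "real \<Rightarrow> real"
  assumes n: "n \<ge> 1" and T: "T > 0" and \<alpha>: "\<alpha> \<ge> 1"
    and a_meas: "\<And>k. k < 2*n \<Longrightarrow> a k \<in> borel_measurable (lebesgue_on {0..T})"
    and a_Lalpha: "\<And>k. k < 2*n \<Longrightarrow> integrable (lebesgue_on {0..T}) (\<lambda>t. \<bar>a k t\<bar> powr \<alpha>)"
    and GP_green: "green_fun (2*n) (2*T) (ext_coeff T a) (BC_P (2*n) (2*T)) GP"
    and GN_ex: "\<exists>G. green_fun (2*n) T a (BC_N n T) G"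
    and GD_ex: "\<exists>G. green_fun (2*n) T a (BC_D n T) G"
    and \<sigma>1: "\<sigma>1 absolutely_integrable_on {0..T}"
    and \<sigma>2: "\<sigma>2 absolutely_integrable_on {0..T}"
    and uN: "bvp_sol (2*n) T a (BC_N n T) uN \<sigma>1"
    and uD: "bvp_sol (2*n) T a (BC_D n T) uD \<sigma>2"
  shows
    "((\<forall>t\<in>{0..2*T}. \<forall>s\<in>{0..2*T}. GP t s \<ge> 0) \<and>
        (AE t in lebesgue_on {0..T}. \<bar>\<sigma>2 t\<bar> \<le> \<sigma>1 t)
       \<longrightarrow> (\<forall>t\<in>{0..T}. \<bar>uD t\<bar> \<le> uN t))
     \<and> ((\<forall>t\<in>{0..2*T}. \<forall>s\<in>{0..2*T}. GP t s \<le> 0) \<and>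
        (AE t in lebesgue_on {0..T}. 0 \<le> \<sigma>2 t \<and> \<sigma>2 t \<le> \<sigma>1 t)
       \<longrightarrow> (\<forall>t\<in>{0..T}. uN t \<le> 0 \<and> uN t \<le> uD t))
     \<and> ((\<forall>t\<in>{0..2*T}. \<forall>s\<in>{0..2*T}. GP t s \<le> 0) \<and>
        (AE t in lebesgue_on {0..T}. \<sigma>1 t \<le> \<sigma>2 t \<and> \<sigma>2 t \<le> 0)
       \<longrightarrow> (\<forall>t\<in>{0..T}. uN t \<ge> 0 \<and> uD t \<le> uN t))"
proof -
  have "nonresonant (2*n) T a (BC_N n T)"
    using GN_ex green_fun_nonresonant by blast
  then have uN_green: "\<forall>t\<in>{0..T}. uN t = integral {0..2*T} (\<lambda>s. GP t s * reflect_ext T 1 \<sigma>1 s)"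
    by (rule bvp_sol_unique[OF _ BC_N_diff uN periodic_green_neumann_sol[OF n T GP_green \<sigma>1]])
  have "nonresonant (2*n) T a (BC_D n T)"
    using GD_ex green_fun_nonresonant by blast
  then have uD_green: "\<forall>t\<in>{0..T}. uD t = integral {0..2*T} (\<lambda>s. GP t s * reflect_ext T (-1) \<sigma>2 s)"
    by (rule bvp_sol_unique[OF _ BC_D_diff uD periodic_green_dirichlet_sol[OF n T GP_green \<sigma>2]])
  have int: "(\<lambda>s. GP t s * reflect_ext T sg \<sigma> s) integrable_on {0..2*T}"
    if "\<sigma> absolutely_integrable_on {0..T}" "t \<in> {0..T}" for \<sigma> sg t
    using green_fun_integrable[OF GP_green absolutely_integrable_reflect_ext[OF _ that(1)]] that(2) T
    by simp
  have "\<bar>uD t\<bar> \<le> uN t"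
    if "\<forall>t\<in>{0..2*T}. \<forall>s\<in>{0..2*T}. GP t s \<ge> 0"
      "AE t in lebesgue_on {0..T}. \<bar>\<sigma>2 t\<bar> \<le> \<sigma>1 t"
      and t: "t \<in> {0..T}" for t
    using integral_reflect_ext_abs_le[OF _ int[OF \<sigma>1 t] int[OF \<sigma>2 t]] that uN_green uD_green T
    by simp
  moreover have "uN t \<le> 0 \<and> uN t \<le> uD t"
    if "\<forall>t\<in>{0..2*T}. \<forall>s\<in>{0..2*T}. GP t s \<le> 0"
      "AE t in lebesgue_on {0..T}. 0 \<le> \<sigma>2 t \<and> \<sigma>2 t \<le> \<sigma>1 t"
      and t: "t \<in> {0..T}" for t
    using integral_reflect_ext_nonpos[OF _ int[OF \<sigma>1 t] int[OF \<sigma>2 t]] that uN_green uD_green T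
    by simp
  moreover have "0 \<le> uN t \<and> uD t \<le> uN t"
    if "\<forall>t\<in>{0..2*T}. \<forall>s\<in>{0..2*T}. GP t s \<le> 0"
      "AE t in lebesgue_on {0..T}. \<sigma>1 t \<le> \<sigma>2 t \<and> \<sigma>2 t \<le> 0"
      and t: "t \<in> {0..T}" for t
    using integral_reflect_ext_nonneg[OF _ int[OF \<sigma>1 t] int[OF \<sigma>2 t]] that uN_green uD_green T
    by simp
  ultimately show ?thesis
    by blast
qed

end
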